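(* Let $\delta\ge0$, $\rho\in(0,1]$ and $\Pi\in\mathscr P_\delta(\Pi^* )$. Put $S_{\Pi,\rho}=(I+\rho^{-2}\Pi)^{1/2}$, $P^*_\rho=(I+\rho^{-2}\Pi^* )^{-1/2}$, $U=P^*_\rho S_{\Pi,\rho}^2P^*_\rho$, $U^*=I$ and $\alpha=2\delta^2\rho^{-2}+2\delta\rho^{-1}$. Then $\|U-U^*\|_2\le\alpha$.
   Context: $\Pi^*$ is the orthogonal projector onto an $m^*$-dimensional subspace of $\mathbb R^d$; $I$ is the $d\times d$ identity; $\|A\|_2$ is the Frobenius norm; $A\preceq B$ means $B-A$ is positive semidefinite; matrix square roots are positive semidefinite square roots. $\mathscr P_\delta(\Pi^* )=\{\Pi\in\mathbb R^{d\times d}\text{ symmetric}:\operatorname{tr}\Pi\le m^*,\ 0\preceq\Pi\preceq I,\ \operatorname{tr}((I-\Pi)\Pi^* )\le\delta^2\}$. Note $P^*_\rho=(I-\Pi^* )+\rho(1+\rho^2)^{-1/2}\Pi^*$. *)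

theory Defs
  imports "HOL-Analysis.Analysis"
begin

text \<open>Real d x d matrices are modelled as real^'n^'n, with 'n a finite index type (d = CARD('n)).\<close>

definition symmetric_mat :: "real^'n^'n \<Rightarrow> bool" where
  "symmetric_mat A \<longleftrightarrow> transpose A = A"

definition psd :: "real^'n^'n \<Rightarrow> bool" where
  "psd A \<longleftrightarrow> symmetric_mat A \<and> (\<forall>x. 0 \<le> x \<bullet> (A *v x))"

definition loewner_le :: "real^'n^'n \<Rightarrow> real^'n^'n \<Rightarrow> bool" where
  "loewner_le A B \<longleftrightarrow> psd (B - A)"

definition psd_sqrt :: "real^'n^'n \<Rightarrow> real^'n^'n" where
  "psd_sqrt A = (THE B. psd B \<and> B ** B = A)"

definition frob_norm :: "real^'n^'n \<Rightarrow> real" where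
  "frob_norm A = sqrt (\<Sum>i\<in>UNIV. \<Sum>j\<in>UNIV. (A $ i $ j)\<^sup>2)"

definition orth_projector :: "real^'n^'n \<Rightarrow> nat \<Rightarrow> bool" where
  "orth_projector P m \<longleftrightarrow> symmetric_mat P \<and> P ** P = P \<and> rank P = m"

definition Pset :: "real \<Rightarrow> nat \<Rightarrow> real^'n^'n \<Rightarrow> (real^'n^'n) set" where
  "Pset \<delta> m Pstar = {P. symmetric_mat P \<and> trace P \<le> real m \<and> loewner_le 0 P
      \<and> loewner_le P (mat 1) \<and> trace ((mat 1 - P) ** Pstar) \<le> \<delta>\<^sup>2}"

end

theory Submission
  imports Defs
begin

text \<open>Write E for the projector \<Pi>*, F = I - E, c = \<rho>^-2 and k = (1 + c)^-1/2. As E is a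
projector, (I + c E)^1/2 = I + (1/k - 1) E, so P*_\<rho> = F + k E and, since k^2 (1 + c) = 1,
  U - I = c FPF - c k (E(I-P)F + F(I-P)E) - c k^2 E(I-P)E.
Taking psd square roots P = R^2 and I - P = R'^2, every term is a product of two factors of small
Frobenius norm: |FPF| <= |RF|^2 = tr(PF) <= tr((I-P)E) <= \<delta>^2 because tr P <= m = tr E;
|E(I-P)E| <= |ER'|^2 <= \<delta>^2; and |E(I-P)F| <= |ER'| <= \<delta> because R'F is a contraction.
Finally c k <= 1/\<rho> and k <= 1 for every \<rho> > 0.\<close>

section \<open>Symmetric matrices and the spectral theorem\<close>

lemma symmetric_mat_inner:
  fixes A :: "real^'n^'n"
  assumes "symmetric_mat A"
  shows "x \<bullet> (A *v y) = (A *v x) \<bullet> y"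
proof -
  have "x \<bullet> (A *v y) = (x v* A) \<bullet> y"
    by (simp add: dot_lmul_matrix)
  also have "x v* A = transpose A *v x"
    by simp
  finally show ?thesis
    using assms by (metis symmetric_mat_def)
qed

lemma symmetric_mat_add: "symmetric_mat A \<Longrightarrow> symmetric_mat B \<Longrightarrow> symmetric_mat (A + B)"
  by (simp add: symmetric_mat_def transpose_def vec_eq_iff)

lemma symmetric_mat_diff: "symmetric_mat A \<Longrightarrow> symmetric_mat B \<Longrightarrow> symmetric_mat (A - B)"
  by (simp add: symmetric_mat_def transpose_def vec_eq_iff)

lemma symmetric_mat_scaleR: "symmetric_mat A \<Longrightarrow> symmetric_mat (k *\<^sub>R A)"
  by (simp add: symmetric_mat_def transpose_scalar)

lemma symmetric_mat_mat: "symmetric_mat (mat k :: real^'n^'n)"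
  by (simp add: symmetric_mat_def)

lemma transpose_symmetric_mat_mult3:
  fixes A B C :: "real^'n^'n"
  assumes "symmetric_mat A" "symmetric_mat B" "symmetric_mat C"
  shows "transpose (A ** B ** C) = C ** B ** A"
  using assms by (simp add: symmetric_mat_def matrix_transpose_mul matrix_mul_assoc)

lemma symmetric_mat_quadratic_form_add:
  fixes A :: "real^'n^'n"
  assumes "symmetric_mat A"
  shows "(v + t *\<^sub>R w) \<bullet> (A *v (v + t *\<^sub>R w)) =
    v \<bullet> (A *v v) + 2 * t * (w \<bullet> (A *v v)) + t\<^sup>2 * (w \<bullet> (A *v w))"
proof -
  have "v \<bullet> (A *v w) = w \<bullet> (A *v v)"
    using symmetric_mat_inner[OF assms, of v w] by (simp add: inner_commute)
  then show ?thesis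
    by (simp add: algebra_simps inner_add_left inner_add_right power2_eq_square)
qed

lemma linear_plus_quadratic_nonpos_imp_zero:
  fixes a b :: real
  assumes "\<And>t. a * t + b * t\<^sup>2 \<le> 0"
  shows "a = 0"
proof (rule ccontr)
  assume "a \<noteq> 0"
  define t where "t = a / (\<bar>b\<bar> + 1)"
  have "a = (\<bar>b\<bar> + 1) * t"
    by (simp add: t_def add_nonneg_pos)
  then have "a * t = \<bar>b\<bar> * t\<^sup>2 + t\<^sup>2"
    by (simp add: power2_eq_square algebra_simps)
  moreover have "- \<bar>b\<bar> * t\<^sup>2 \<le> b * t\<^sup>2"
    by (intro mult_right_mono) auto
  moreover have "0 < t\<^sup>2"
    using \<open>a \<noteq> 0\<close> by (simp add: t_def add_pos_nonneg)
  ultimately have "0 < a * t + b * t\<^sup>2"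
    by linarith
  with assms[of t] show False
    by linarith
qed

lemma quadratic_form_maximizer_on_subspace:
  fixes A :: "real^'n^'n"
  assumes W: "subspace W" "W \<noteq> {0}"
  obtains v where "v \<in> W" "v \<bullet> v = 1" "\<And>x. x \<in> W \<Longrightarrow> x \<bullet> (A *v x) \<le> (v \<bullet> (A *v v)) * (x \<bullet> x)"
proof -
  define K where "K = W \<inter> sphere 0 1"
  have "compact K"
    unfolding K_def by (simp add: W closed_subspace closed_Int_compact)
  obtain x where "x \<in> W" "x \<noteq> 0"
    using W subspace_0 by blast
  then have "(1 / norm x) *\<^sub>R x \<in> K"
    using W by (simp add: K_def subspace_scale)
  then have "K \<noteq> {}"
    by blast
  moreover have "continuous_on K (\<lambda>x. x \<bullet> (A *v x))"
    by (intro continuous_intros linear_continuous_on matrix_vector_mul_linear)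
  ultimately obtain v where "v \<in> K" and v_max: "\<And>y. y \<in> K \<Longrightarrow> y \<bullet> (A *v y) \<le> v \<bullet> (A *v v)"
    using continuous_attains_sup[OF \<open>compact K\<close>] by blast
  have "x \<bullet> (A *v x) \<le> (v \<bullet> (A *v v)) * (x \<bullet> x)" if "x \<in> W" for x
  proof (cases "x = 0")
    case False
    have "(1 / norm x) *\<^sub>R x \<in> K"
      using False that W by (simp add: K_def subspace_scale)
    from v_max[OF this] show ?thesis
      using False by (simp add: dot_square_norm matrix_vector_mult_scaleR field_simps
          power2_eq_square)
  qed simp
  moreover have "v \<in> W" "v \<bullet> v = 1"
    using \<open>v \<in> K\<close> by (auto simp: K_def dot_square_norm)
  ultimately show thesis
    using that by blast
qed

lemma symmetric_mat_invariant_subspace_eigenvector: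
  fixes A :: "real^'n^'n"
  assumes A: "symmetric_mat A" and W: "subspace W" "W \<noteq> {0}"
    and invariant: "\<And>w. w \<in> W \<Longrightarrow> A *v w \<in> W"
  obtains v where "v \<in> W" "norm v = 1" "A *v v = (v \<bullet> (A *v v)) *\<^sub>R v"
proof -
  obtain v where "v \<in> W" "v \<bullet> v = 1"
    and Rayleigh: "\<And>x. x \<in> W \<Longrightarrow> x \<bullet> (A *v x) \<le> (v \<bullet> (A *v v)) * (x \<bullet> x)"
    using quadratic_form_maximizer_on_subspace[OF W] by blast
  define l where "l = v \<bullet> (A *v v)"
  define g where "g = A *v v - l *\<^sub>R v"
  have "g \<in> W"
    unfolding g_def using \<open>v \<in> W\<close> invariant W by (simp add: subspace_diff subspace_scale)
  have "g \<bullet> (A *v v) = g \<bullet> g + l * (v \<bullet> g)"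
    by (simp add: g_def inner_diff_left inner_diff_right inner_commute algebra_simps)
  \<comment> \<open>v maximises the Rayleigh quotient on W, so its first variation along g vanishes\<close>
  have "2 * (g \<bullet> g) = 0"
  proof (rule linear_plus_quadratic_nonpos_imp_zero)
    fix t :: real
    have "v + t *\<^sub>R g \<in> W"
      using \<open>v \<in> W\<close> \<open>g \<in> W\<close> W by (simp add: subspace_add subspace_scale)
    from Rayleigh[OF this]
    have "l + 2 * t * (g \<bullet> (A *v v)) + t\<^sup>2 * (g \<bullet> (A *v g))
        \<le> l * (1 + 2 * t * (g \<bullet> v) + t\<^sup>2 * (g \<bullet> g))"
      using \<open>v \<bullet> v = 1\<close> unfolding symmetric_mat_quadratic_form_add[OF A] l_def[symmetric]
      by (simp add: inner_add_left inner_add_right inner_commute power2_eq_square algebra_simps)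
    with \<open>g \<bullet> (A *v v) = _\<close>
    show "2 * (g \<bullet> g) * t + (g \<bullet> (A *v g) - l * (g \<bullet> g)) * t\<^sup>2 \<le> 0"
      by (simp add: inner_commute algebra_simps)
  qed
  then show thesis
    using that \<open>v \<in> W\<close> \<open>v \<bullet> v = 1\<close> by (simp add: g_def l_def norm_eq_1)
qed

definition orthonormal :: "'a::real_inner set \<Rightarrow> bool" where
  "orthonormal B \<longleftrightarrow> finite B \<and> pairwise orthogonal B \<and> (\<forall>b\<in>B. norm b = 1)"

lemma orthonormal_independent: "orthonormal B \<Longrightarrow> independent B"
  unfolding orthonormal_def by (metis norm_zero pairwise_orthogonal_independent zero_neq_one)

lemma orthonormal_inner_sum:
  assumes "orthonormal B" "b \<in> B"
  shows "b \<bullet> (\<Sum>c\<in>B. f c *\<^sub>R c) = f b"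
proof -
  have "b \<bullet> (\<Sum>c\<in>B. f c *\<^sub>R c) = (\<Sum>c\<in>B. f c * (b \<bullet> c))"
    by (simp add: inner_sum_right)
  also have "\<dots> = f b * (b \<bullet> b) + (\<Sum>c\<in>B - {b}. f c * (b \<bullet> c))"
    using assms by (simp add: orthonormal_def sum.remove)
  also have "(\<Sum>c\<in>B - {b}. f c * (b \<bullet> c)) = 0"
    using assms by (intro sum.neutral) (auto simp: orthonormal_def pairwise_def orthogonal_def)
  finally show ?thesis
    using assms by (simp add: orthonormal_def dot_square_norm)
qed

lemma orthonormal_span_expansion:
  fixes B :: "'a::euclidean_space set"
  assumes "orthonormal B" "x \<in> span B"
  shows "x = (\<Sum>b\<in>B. (b \<bullet> x) *\<^sub>R b)"
proof -
  obtain u where x: "x = (\<Sum>b\<in>B. u b *\<^sub>R b)"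
    using assms span_finite[of B] by (auto simp: orthonormal_def)
  then have "b \<bullet> x = u b" if "b \<in> B" for b
    using orthonormal_inner_sum[OF assms(1) that] by simp
  then show ?thesis
    using x by simp
qed

lemma orthonormal_eigenvectors_extend:
  fixes A :: "real^'n^'n"
  assumes A: "symmetric_mat A" and B: "orthonormal B" "card B < CARD('n)"
    and eigen: "\<And>b. b \<in> B \<Longrightarrow> A *v b = (b \<bullet> (A *v b)) *\<^sub>R b"
  obtains v where "v \<notin> B" "orthonormal (insert v B)" "A *v v = (v \<bullet> (A *v v)) *\<^sub>R v"
proof -
  define W where "W = {y. \<forall>b\<in>B. orthogonal b y}"
  have "subspace W"
    unfolding W_def by (rule subspace_orthogonal_to_vectors)
  have "dim B < DIM(real^'n)"
    using B(2) dim_eq_card_independent[OF orthonormal_independent[OF B(1)]] by simp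
  then obtain x where "x \<noteq> 0" "\<And>y. y \<in> span B \<Longrightarrow> orthogonal x y"
    using orthogonal_to_subspace_exists by blast
  then have "x \<in> W"
    by (auto simp: W_def orthogonal_commute intro: span_base)
  have "A *v w \<in> W" if "w \<in> W" for w
  proof -
    have "b \<bullet> (A *v w) = (b \<bullet> (A *v b)) * (b \<bullet> w)" if "b \<in> B" for b
      using symmetric_mat_inner[OF A, of b w] eigen[OF that] by (metis inner_scaleR_left)
    then show ?thesis
      using \<open>w \<in> W\<close> by (simp add: W_def orthogonal_def)
  qed
  then obtain v where "v \<in> W" "norm v = 1" "A *v v = (v \<bullet> (A *v v)) *\<^sub>R v"
    using symmetric_mat_invariant_subspace_eigenvector[OF A \<open>subspace W\<close>] \<open>x \<in> W\<close> \<open>x \<noteq> 0\<close>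
    by blast
  moreover from this have "v \<notin> B"
    by (auto simp: W_def orthogonal_def dot_square_norm)
  moreover have "orthonormal (insert v B)"
    using B \<open>v \<in> W\<close> \<open>norm v = 1\<close>
    by (auto simp: orthonormal_def pairwise_insert W_def orthogonal_commute)
  ultimately show thesis
    using that by blast
qed

theorem symmetric_mat_orthonormal_eigenbasis:
  fixes A :: "real^'n^'n"
  assumes A: "symmetric_mat A"
  obtains B where "orthonormal B" "span B = UNIV"
    "\<And>b. b \<in> B \<Longrightarrow> A *v b = (b \<bullet> (A *v b)) *\<^sub>R b"
proof -
  have "\<exists>B. orthonormal B \<and> card B = k \<and> (\<forall>b\<in>B. A *v b = (b \<bullet> (A *v b)) *\<^sub>R b)"
    if "k \<le> CARD('n)" for k
    using that
  proof (induction k)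
    case 0
    show ?case
      by (intro exI[of _ "{}"]) (simp add: orthonormal_def)
  next
    case (Suc k)
    then obtain B where B: "orthonormal B" "card B = k"
      and eigen: "\<forall>b\<in>B. A *v b = (b \<bullet> (A *v b)) *\<^sub>R b"
      by auto
    with Suc.prems obtain v where "v \<notin> B" "orthonormal (insert v B)"
      "A *v v = (v \<bullet> (A *v v)) *\<^sub>R v"
      using orthonormal_eigenvectors_extend[OF A B(1)] by (metis Suc_le_lessD)
    then show ?case
      using B eigen by (intro exI[of _ "insert v B"]) (simp add: orthonormal_def)
  qed
  then obtain B where B: "orthonormal B" "card B = CARD('n)"
    and eigen: "\<forall>b\<in>B. A *v b = (b \<bullet> (A *v b)) *\<^sub>R b"
    by blast
  have "span B = UNIV"
    using card_ge_dim_independent[OF _ orthonormal_independent[OF B(1)], of UNIV] B(2)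
    by auto
  with B eigen that show thesis
    by blast
qed

lemma matrix_eqI:
  fixes A B :: "real^'n^'m"
  assumes "\<And>x. A *v x = B *v x"
  shows "A = B"
  using assms matrix_eq by blast

lemma orthonormal_basis_matrix_eqI:
  fixes M N :: "real^'n^'n"
  assumes B: "orthonormal B" "span B = UNIV" and eq: "\<And>b. b \<in> B \<Longrightarrow> M *v b = N *v b"
  shows "M = N"
proof (rule matrix_eqI)
  fix x
  have x: "x = (\<Sum>b\<in>B. (b \<bullet> x) *\<^sub>R b)"
    using orthonormal_span_expansion[OF B(1)] B(2) by simp
  show "M *v x = N *v x"
    by (subst (1 2) x) (simp add: linear_sum[OF matrix_vector_mul_linear] matrix_vector_mult_scaleR eq)
qed

section \<open>Positive semidefinite square roots\<close>

definition spectral_sum :: "(real^'n \<Rightarrow> real) \<Rightarrow> (real^'n) set \<Rightarrow> real^'n^'n" where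
  "spectral_sum f B = (\<chi> i j. \<Sum>b\<in>B. f b * b$i * b$j)"

lemma spectral_sum_mult_vector: "spectral_sum f B *v x = (\<Sum>b\<in>B. (f b * (b \<bullet> x)) *\<^sub>R b)"
  by (simp add: spectral_sum_def vec_eq_iff matrix_vector_mult_def inner_vec_def sum_component
      sum_distrib_left sum_distrib_right mult_ac sum.swap[where A=B])

lemma symmetric_spectral_sum: "symmetric_mat (spectral_sum f B)"
  by (simp add: symmetric_mat_def spectral_sum_def transpose_def vec_eq_iff mult_ac)

lemma spectral_sum_mult_basis_vector:
  assumes "orthonormal B" "b \<in> B"
  shows "spectral_sum f B *v b = f b *\<^sub>R b"
proof -
  have "c \<bullet> b = (if c = b then 1 else 0)" if "c \<in> B" for c
    using assms that by (auto simp: orthonormal_def pairwise_def orthogonal_def dot_square_norm)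
  then have "spectral_sum f B *v b = (\<Sum>c\<in>B. if c = b then f b *\<^sub>R b else 0)"
    by (auto simp: spectral_sum_mult_vector intro!: sum.cong)
  then show ?thesis
    using assms by (simp add: orthonormal_def)
qed

lemma psd_sqrt_exists:
  fixes A :: "real^'n^'n"
  assumes "psd A"
  shows "\<exists>S. psd S \<and> S ** S = A"
proof -
  obtain B where B: "orthonormal B" "span B = UNIV"
    and eigen: "\<And>b. b \<in> B \<Longrightarrow> A *v b = (b \<bullet> (A *v b)) *\<^sub>R b"
    using symmetric_mat_orthonormal_eigenbasis assms by (auto simp: psd_def)
  define \<mu> where "\<mu> b = sqrt (b \<bullet> (A *v b))" for b
  have "\<mu> b * \<mu> b = b \<bullet> (A *v b)" for b
    using assms by (simp add: \<mu>_def psd_def)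
  define S where "S = spectral_sum \<mu> B"
  have "psd S"
    unfolding psd_def
  proof (intro conjI allI)
    show "symmetric_mat S"
      by (simp add: S_def symmetric_spectral_sum)
    fix x
    have "x \<bullet> (S *v x) = (\<Sum>b\<in>B. \<mu> b * (b \<bullet> x)\<^sup>2)"
      by (simp add: S_def spectral_sum_mult_vector inner_sum_right inner_commute power2_eq_square
          mult_ac)
    also have "\<dots> \<ge> 0"
      using assms by (intro sum_nonneg) (simp add: \<mu>_def psd_def)
    finally show "0 \<le> x \<bullet> (S *v x)" .
  qed
  moreover have "S ** S = A"
  proof (rule orthonormal_basis_matrix_eqI[OF B])
    fix b assume "b \<in> B"
    then show "(S ** S) *v b = A *v b"
      using \<open>\<mu> b * \<mu> b = _\<close> eigen[of b]
      by (simp add: S_def spectral_sum_mult_basis_vector[OF B(1)] matrix_vector_mult_scaleR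
          flip: matrix_vector_mul_assoc)
  qed
  ultimately show ?thesis
    by blast
qed

lemma psd_quadratic_form_eq_0_imp:
  fixes A :: "real^'n^'n"
  assumes "psd A" "v \<bullet> (A *v v) = 0"
  shows "A *v v = 0"
proof -
  define w where "w = A *v v"
  \<comment> \<open>a nonnegative quadratic form vanishing at v has vanishing derivative there\<close>
  have "- 2 * (w \<bullet> w) = 0"
  proof (rule linear_plus_quadratic_nonpos_imp_zero)
    fix t :: real
    have "0 \<le> (v + t *\<^sub>R w) \<bullet> (A *v (v + t *\<^sub>R w))"
      using assms by (simp add: psd_def)
    also have "\<dots> = 2 * t * (w \<bullet> w) + t\<^sup>2 * (w \<bullet> (A *v w))"
      using assms by (simp add: psd_def symmetric_mat_quadratic_form_add w_def)
    finally show "- 2 * (w \<bullet> w) * t + - (w \<bullet> (A *v w)) * t\<^sup>2 \<le> 0"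
      by (simp add: algebra_simps)
  qed
  then show ?thesis
    by (simp add: w_def)
qed

lemma psd_sqrt_unique:
  fixes S T :: "real^'n^'n"
  assumes S: "psd S" and T: "psd T" and eq: "S ** S = T ** T"
  shows "S = T"
proof -
  have "symmetric_mat (S - T)"
    using S T by (simp add: psd_def symmetric_mat_diff)
  then obtain B where B: "orthonormal B" "span B = UNIV"
    and eigen: "\<And>b. b \<in> B \<Longrightarrow> (S - T) *v b = (b \<bullet> ((S - T) *v b)) *\<^sub>R b"
    using symmetric_mat_orthonormal_eigenbasis by blast
  have "S - T = 0"
  proof (rule orthonormal_basis_matrix_eqI[OF B])
    fix b assume "b \<in> B"
    define l where "l = b \<bullet> ((S - T) *v b)"
    have Db: "(S - T) *v b = l *\<^sub>R b"
      using eigen[OF \<open>b \<in> B\<close>] by (simp add: l_def)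
    \<comment> \<open>S (S - T) + (S - T) T = S S - T T = 0; pairing with the eigenvector b of S - T gives
      l (b.Sb + b.Tb) = 0\<close>
    have "S *v (S *v b) = T *v (T *v b)"
      using eq by (simp add: matrix_vector_mul_assoc)
    then have "S *v ((S - T) *v b) + (S - T) *v (T *v b) = 0"
      by (simp add: algebra_simps)
    then have "0 = b \<bullet> (S *v ((S - T) *v b)) + ((S - T) *v b) \<bullet> (T *v b)"
      by (metis inner_add_right inner_zero_right symmetric_mat_inner[OF \<open>symmetric_mat (S - T)\<close>])
    then have "l * (b \<bullet> (S *v b) + b \<bullet> (T *v b)) = 0"
      unfolding Db by (simp add: matrix_vector_mult_scaleR distrib_left)
    moreover have "b \<bullet> (S *v b) \<ge> 0" "b \<bullet> (T *v b) \<ge> 0"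
      using S T by (auto simp: psd_def)
    ultimately have "l = 0 \<or> (S *v b = 0 \<and> T *v b = 0)"
      using psd_quadratic_form_eq_0_imp S T by force
    then show "(S - T) *v b = 0 *v b"
      using Db by (auto simp: matrix_vector_mult_diff_rdistrib)
  qed
  then show ?thesis
    by simp
qed

lemma psd_sqrt_eqI:
  assumes "psd S" "S ** S = A"
  shows "psd_sqrt A = S"
  unfolding psd_sqrt_def by (rule the_equality) (use assms psd_sqrt_unique in auto)

lemma psd_sqrt_square:
  assumes "psd A"
  shows "psd_sqrt A ** psd_sqrt A = A"
  using psd_sqrt_exists[OF assms] psd_sqrt_eqI by metis

lemma psd_id_plus_scaleR:
  assumes "psd A" "0 \<le> c"
  shows "psd (mat 1 + c *\<^sub>R A)"
  using assms
  by (simp add: psd_def symmetric_mat_add symmetric_mat_mat symmetric_mat_scaleR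
      matrix_vector_mult_add_rdistrib scaleR_matrix_vector_assoc[symmetric] inner_add_right)

section \<open>The Frobenius norm\<close>

lemma norm_power2_rows:
  fixes A :: "'a::real_inner^'m"
  shows "(norm A)\<^sup>2 = (\<Sum>i\<in>UNIV. (norm (A$i))\<^sup>2)"
  by (simp add: power2_norm_eq_inner inner_vec_def)

lemma frob_norm_eq_norm: "frob_norm A = norm A"
proof -
  have "(norm A)\<^sup>2 = (\<Sum>i\<in>UNIV. \<Sum>j\<in>UNIV. (A $ i $ j)\<^sup>2)"
    by (simp only: norm_power2_rows) (simp add: power2_norm_eq_inner inner_vec_def power2_eq_square)
  then show ?thesis
    unfolding frob_norm_def by (metis norm_ge_zero real_sqrt_abs abs_of_nonneg)
qed

lemma norm_power2_eq_trace: "(norm (A::real^'n^'m))\<^sup>2 = trace (A ** transpose A)"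
  by (simp only: norm_power2_rows)
    (simp add: power2_norm_eq_inner inner_vec_def trace_def matrix_matrix_mult_def transpose_def
      power2_eq_square)

lemma norm_transpose_matrix: "norm (transpose (A::real^'n^'n)) = norm A"
proof -
  have "(norm (transpose A))\<^sup>2 = (norm A)\<^sup>2"
    by (simp add: norm_power2_eq_trace trace_mul_sym[of "transpose A"])
  then show ?thesis
    by (simp add: power2_eq_iff_nonneg)
qed

lemma norm_matrix_vector_mult_le: "norm ((M::real^'n^'m) *v z) \<le> norm M * norm z"
proof -
  have "(norm (M *v z))\<^sup>2 = (\<Sum>i\<in>UNIV. ((M$i) \<bullet> z)\<^sup>2)"
    by (simp add: norm_power2_rows matrix_vector_mul_component)
  also have "\<dots> \<le> (\<Sum>i\<in>UNIV. (norm (M$i) * norm z)\<^sup>2)"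
    by (intro sum_mono) (metis Cauchy_Schwarz_ineq2 power2_abs abs_ge_zero power_mono)
  also have "\<dots> = (norm M * norm z)\<^sup>2"
    by (simp add: norm_power2_rows power_mult_distrib sum_distrib_right)
  finally show ?thesis
    by (rule power2_le_imp_le) simp
qed

lemma norm_matrix_mult_le_bound:
  fixes A B :: "real^'n^'n"
  assumes "0 \<le> K" and bound: "\<And>z. norm (transpose B *v z) \<le> K * norm z"
  shows "norm (A ** B) \<le> norm A * K"
proof -
  have row: "(A ** B) $ i = transpose B *v (A $ i)" for i
    by (simp add: vec_eq_iff matrix_matrix_mult_def matrix_vector_mult_def transpose_def mult.commute)
  have "(norm (A ** B))\<^sup>2 = (\<Sum>i\<in>UNIV. (norm (transpose B *v (A$i)))\<^sup>2)"
    by (simp add: norm_power2_rows row)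
  also have "\<dots> \<le> (\<Sum>i\<in>UNIV. (K * norm (A$i))\<^sup>2)"
    by (intro sum_mono power_mono bound) simp
  also have "\<dots> = (norm A * K)\<^sup>2"
    by (simp add: norm_power2_rows power_mult_distrib sum_distrib_left mult.commute)
  finally show ?thesis
    by (rule power2_le_imp_le) (use assms in simp)
qed

lemma norm_matrix_mult_le:
  fixes A B :: "real^'n^'n"
  shows "norm (A ** B) \<le> norm A * norm B"
proof (rule norm_matrix_mult_le_bound)
  show "norm (transpose B *v z) \<le> norm B * norm z" for z
    using norm_matrix_vector_mult_le[of "transpose B" z] by (simp add: norm_transpose_matrix)
qed simp

lemma norm_mult_symmetric_power2:
  fixes R X :: "real^'n^'n"
  assumes "symmetric_mat R" "symmetric_mat X"
  shows "(norm (X ** R))\<^sup>2 = trace ((R ** R) ** (X ** X))"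
proof -
  have "(norm (X ** R))\<^sup>2 = trace (X ** ((R ** R) ** X))"
    using assms by (simp add: norm_power2_eq_trace matrix_transpose_mul symmetric_mat_def
        matrix_mul_assoc)
  also have "\<dots> = trace ((R ** R) ** X ** X)"
    by (rule trace_mul_sym)
  finally show ?thesis
    by (simp add: matrix_mul_assoc)
qed

section \<open>Orthogonal projectors\<close>

definition projector :: "real^'n^'n \<Rightarrow> bool" where
  "projector E \<longleftrightarrow> symmetric_mat E \<and> E ** E = E"

lemma projector_idem_vector: "projector E \<Longrightarrow> E *v (E *v x) = E *v x"
  by (simp add: projector_def matrix_vector_mul_assoc)

lemma projector_complement:
  assumes "projector E"
  shows "projector (mat 1 - E)"
  unfolding projector_def
proof
  show "symmetric_mat (mat 1 - E)"
    using assms by (simp add: projector_def symmetric_mat_diff symmetric_mat_mat)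
  show "(mat 1 - E) ** (mat 1 - E) = mat 1 - E"
    by (rule matrix_eqI)
      (simp add: assms projector_idem_vector algebra_simps flip: matrix_vector_mul_assoc)
qed

lemma projector_quadratic_form:
  assumes "projector E"
  shows "x \<bullet> (E *v x) = (norm (E *v x))\<^sup>2"
  using symmetric_mat_inner[of E x "E *v x"] assms
  by (simp add: projector_def projector_idem_vector dot_square_norm)

lemma psd_projector: "projector E \<Longrightarrow> psd E"
  by (simp add: psd_def projector_quadratic_form) (simp add: projector_def)

lemma norm_projector_mult_vector_le:
  assumes "projector E"
  shows "norm (E *v x) \<le> norm x"
proof -
  have "(norm x)\<^sup>2 = x \<bullet> (E *v x) + x \<bullet> ((mat 1 - E) *v x)"
    by (simp add: dot_square_norm matrix_vector_mult_diff_rdistrib inner_diff_right)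
  also have "\<dots> = (norm (E *v x))\<^sup>2 + (norm ((mat 1 - E) *v x))\<^sup>2"
    by (simp add: projector_quadratic_form[OF assms]
        projector_quadratic_form[OF projector_complement[OF assms]])
  finally have "(norm (E *v x))\<^sup>2 \<le> (norm x)\<^sup>2"
    by simp
  then show ?thesis
    by (rule power2_le_imp_le) simp
qed

lemma trace_projector:
  assumes "projector E"
  shows "trace E = real (rank E)"
proof -
  define R where "R = range (\<lambda>x. E *v x)"
  have "subspace R"
    unfolding R_def by (rule linear_subspace_image[OF matrix_vector_mul_linear subspace_UNIV])
  then obtain U where "U \<subseteq> R" "pairwise orthogonal U" "\<And>x. x \<in> U \<Longrightarrow> norm x = 1"
    "independent U" "card U = dim R" "span U = R"
    using orthonormal_basis_subspace by blast
  then have U: "orthonormal U"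
    by (auto simp: orthonormal_def independent_imp_finite)
  have "rank E = card U"
    using \<open>card U = dim R\<close> by (simp add: rank_dim_range R_def)
  have "E *v x = (\<Sum>u\<in>U. (u \<bullet> x) *\<^sub>R u)" for x
  proof -
    have "E *v u = u" if "u \<in> U" for u
      using that \<open>U \<subseteq> R\<close> assms by (auto simp: R_def projector_idem_vector)
    then have "u \<bullet> (E *v x) = u \<bullet> x" if "u \<in> U" for u
      using symmetric_mat_inner[of E u x] that assms by (simp add: projector_def)
    moreover have "E *v x \<in> span U"
      using \<open>span U = R\<close> by (simp add: R_def)
    ultimately show ?thesis
      using orthonormal_span_expansion[OF U] by (metis (no_types, lifting) sum.cong)
  qed
  moreover have "trace E = (\<Sum>i\<in>UNIV. (E *v axis i 1) $ i)"
    by (simp add: trace_def matrix_vector_mult_basis column_def)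
  ultimately have "trace E = (\<Sum>i\<in>UNIV. \<Sum>u\<in>U. u$i * u$i)"
    by (simp add: sum_component inner_axis)
  also have "\<dots> = (\<Sum>u\<in>U. u \<bullet> u)"
    by (subst sum.swap) (simp add: inner_vec_def)
  also have "\<dots> = card U"
    using U by (simp add: orthonormal_def dot_square_norm)
  finally show ?thesis
    using \<open>rank E = card U\<close> by simp
qed

lemma projector_affine_mult:
  assumes "projector E"
  shows "(mat 1 + a *\<^sub>R E) ** (mat 1 + b *\<^sub>R E) = mat 1 + (a + b + a * b) *\<^sub>R E"
  by (rule matrix_eqI)
    (simp add: assms projector_idem_vector algebra_simps scaleR_matrix_vector_assoc[symmetric]
      flip: matrix_vector_mul_assoc)

lemma psd_sqrt_id_plus_projector:
  assumes "projector E" "0 \<le> c"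
  shows "psd_sqrt (mat 1 + c *\<^sub>R E) = mat 1 + (sqrt (1 + c) - 1) *\<^sub>R E"
proof (rule psd_sqrt_eqI)
  show "psd (mat 1 + (sqrt (1 + c) - 1) *\<^sub>R E)"
    using assms by (simp add: psd_id_plus_scaleR psd_projector)
  have "sqrt (1 + c) - 1 + (sqrt (1 + c) - 1) + (sqrt (1 + c) - 1) * (sqrt (1 + c) - 1) = c"
    using assms by (simp add: algebra_simps)
  then show "(mat 1 + (sqrt (1 + c) - 1) *\<^sub>R E) ** (mat 1 + (sqrt (1 + c) - 1) *\<^sub>R E) =
      mat 1 + c *\<^sub>R E"
    by (simp add: projector_affine_mult[OF assms(1)])
qed

lemma matrix_inv_eqI:
  fixes A B :: "real^'n^'n"
  assumes "A ** B = mat 1" "B ** A = mat 1"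
  shows "matrix_inv A = B"
proof -
  have "A ** matrix_inv A = mat 1 \<and> matrix_inv A ** A = mat 1"
    unfolding matrix_inv_def by (rule someI[of _ B]) (use assms in blast)
  then have "matrix_inv A = (B ** A) ** matrix_inv A"
    using assms by simp
  also have "\<dots> = B"
    using \<open>A ** matrix_inv A = mat 1 \<and> _\<close> by (simp flip: matrix_mul_assoc)
  finally show ?thesis .
qed

lemma matrix_inv_psd_sqrt_id_plus_projector:
  assumes "projector E" "0 \<le> c"
  shows "matrix_inv (psd_sqrt (mat 1 + c *\<^sub>R E)) = mat 1 + (1 / sqrt (1 + c) - 1) *\<^sub>R E"
proof -
  define s where "s = sqrt (1 + c)"
  have "s - 1 + (1 / s - 1) + (s - 1) * (1 / s - 1) = 0"
    using assms by (simp add: s_def field_simps)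
  then have "(mat 1 + (s - 1) *\<^sub>R E) ** (mat 1 + (1 / s - 1) *\<^sub>R E) = mat 1"
    "(mat 1 + (1 / s - 1) *\<^sub>R E) ** (mat 1 + (s - 1) *\<^sub>R E) = mat 1"
    by (simp_all add: projector_affine_mult[OF assms(1)] add.commute mult.commute)
  then show ?thesis
    using assms by (simp add: psd_sqrt_id_plus_projector matrix_inv_eqI flip: s_def)
qed

section \<open>The perturbation bound\<close>

lemma norm_symmetric_mult_vector_le:
  fixes R :: "real^'n^'n"
  assumes "symmetric_mat R" "psd (mat 1 - R ** R)"
  shows "norm (R *v z) \<le> norm z"
proof -
  have "(norm (R *v z))\<^sup>2 = z \<bullet> ((R ** R) *v z)"
    using symmetric_mat_inner[OF assms(1), of z "R *v z"]
    by (simp add: dot_square_norm matrix_vector_mul_assoc)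
  also have "\<dots> \<le> (norm z)\<^sup>2"
    using assms(2) by (simp add: psd_def dot_square_norm matrix_vector_mult_diff_rdistrib
        inner_diff_right)
  finally show ?thesis
    by (rule power2_le_imp_le) simp
qed

lemma norm_projector_psd_projector_le_trace:
  fixes A E :: "real^'n^'n"
  assumes E: "projector E" and A: "psd A"
  shows "norm (E ** A ** E) \<le> trace (A ** E)"
proof -
  obtain R where R: "psd R" "R ** R = A"
    using psd_sqrt_exists[OF A] by blast
  have "symmetric_mat R" "symmetric_mat E"
    using R E by (auto simp: psd_def projector_def)
  then have "E ** A ** E = (E ** R) ** transpose (E ** R)"
    unfolding R(2)[symmetric] by (simp add: symmetric_mat_def matrix_transpose_mul matrix_mul_assoc)
  then have "norm (E ** A ** E) \<le> (norm (E ** R))\<^sup>2"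
    using norm_matrix_mult_le[of "E ** R" "transpose (E ** R)"]
    by (simp add: norm_transpose_matrix power2_eq_square)
  also have "\<dots> = trace (A ** E)"
    using R(2) E by (simp add: norm_mult_symmetric_power2[OF \<open>symmetric_mat R\<close> \<open>symmetric_mat E\<close>]
        projector_def)
  finally show ?thesis .
qed

lemma norm_projector_contraction_projector_power2_le:
  fixes B E F :: "real^'n^'n"
  assumes E: "projector E" and F: "projector F" and B: "psd B" "psd (mat 1 - B)"
  shows "(norm (E ** B ** F))\<^sup>2 \<le> trace (B ** E)"
proof -
  obtain R where R: "psd R" "R ** R = B"
    using psd_sqrt_exists[OF B(1)] by blast
  have "symmetric_mat R" "symmetric_mat E" "symmetric_mat F"
    using R E F by (auto simp: psd_def projector_def)
  have "norm ((E ** R) ** (R ** F)) \<le> norm (E ** R) * 1"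
  proof (rule norm_matrix_mult_le_bound)
    fix z
    have "transpose (R ** F) = F ** R"
      using \<open>symmetric_mat R\<close> \<open>symmetric_mat F\<close> by (simp add: matrix_transpose_mul symmetric_mat_def)
    then show "norm (transpose (R ** F) *v z) \<le> 1 * norm z"
      using norm_projector_mult_vector_le[OF F, of "R *v z"]
        norm_symmetric_mult_vector_le[OF \<open>symmetric_mat R\<close>, of z] R B
      by (simp flip: matrix_vector_mul_assoc)
  qed simp
  then have "(norm (E ** B ** F))\<^sup>2 \<le> (norm (E ** R))\<^sup>2"
    unfolding R(2)[symmetric] by (simp add: matrix_mul_assoc power_mono)
  also have "\<dots> = trace (B ** E)"
    using R(2) E by (simp add: norm_mult_symmetric_power2[OF \<open>symmetric_mat R\<close> \<open>symmetric_mat E\<close>]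
        projector_def)
  finally show ?thesis .
qed

lemma trace_mult_complement_le:
  fixes P E :: "real^'n^'n"
  assumes "trace P \<le> trace E"
  shows "trace (P ** (mat 1 - E)) \<le> trace ((mat 1 - P) ** E)"
proof -
  have "P ** (mat 1 - E) = P - P ** E"
    by (rule matrix_eqI) (simp add: algebra_simps flip: matrix_vector_mul_assoc)
  moreover have "(mat 1 - P) ** E = E - P ** E"
    by (rule matrix_eqI) (simp add: algebra_simps flip: matrix_vector_mul_assoc)
  ultimately show ?thesis
    using assms by (simp add: trace_sub)
qed

lemma conjugate_id_plus_scaleR_minus_id:
  fixes E P :: "real^'n^'n"
  assumes E: "projector E" and k: "k\<^sup>2 * (1 + c) = 1"
  defines "F \<equiv> mat 1 - E" and "T \<equiv> mat 1 + (k - 1) *\<^sub>R E"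
  shows "T ** (mat 1 + c *\<^sub>R P) ** T - mat 1 =
    c *\<^sub>R (F ** P ** F) - (c * k) *\<^sub>R (E ** (mat 1 - P) ** F + F ** (mat 1 - P) ** E)
      - (c * k\<^sup>2) *\<^sub>R (E ** (mat 1 - P) ** E)"
proof -
  have "T ** (mat 1 + c *\<^sub>R P) ** T - mat 1 =
    c *\<^sub>R (F ** P ** F) - (c * k) *\<^sub>R (E ** (mat 1 - P) ** F + F ** (mat 1 - P) ** E)
      - (c * k\<^sup>2) *\<^sub>R (E ** (mat 1 - P) ** E) + (k\<^sup>2 * (1 + c) - 1) *\<^sub>R E"
    by (rule matrix_eqI)
      (simp add: F_def T_def E projector_idem_vector algebra_simps power2_eq_square
        scaleR_matrix_vector_assoc[symmetric] flip: matrix_vector_mul_assoc)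
  then show ?thesis
    using k by simp
qed

lemma norm_conjugate_id_plus_scaleR_minus_id_le:
  fixes E P :: "real^'n^'n"
  assumes E: "projector E" and P: "psd P" "psd (mat 1 - P)" "trace P \<le> trace E"
    and \<delta>: "trace ((mat 1 - P) ** E) \<le> \<delta>\<^sup>2" "0 \<le> \<delta>"
    and c: "0 \<le> c" and k: "0 \<le> k" "k\<^sup>2 * (1 + c) = 1"
  shows "norm ((mat 1 + (k - 1) *\<^sub>R E) ** (mat 1 + c *\<^sub>R P) ** (mat 1 + (k - 1) *\<^sub>R E) - mat 1)
    \<le> c * \<delta>\<^sup>2 + c * k * (2 * \<delta>) + c * k\<^sup>2 * \<delta>\<^sup>2"
proof -
  define F where "F = mat 1 - E"
  have F: "projector F"
    using projector_complement[OF E] by (simp add: F_def)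
  have "symmetric_mat E" "symmetric_mat F" "symmetric_mat (mat 1 - P)"
    using E F P(2) by (auto simp: projector_def psd_def)
  have A: "norm (F ** P ** F) \<le> \<delta>\<^sup>2"
    using norm_projector_psd_projector_le_trace[OF F P(1)] trace_mult_complement_le[OF P(3)] \<delta>(1)
    by (simp add: F_def)
  have "(norm (E ** (mat 1 - P) ** F))\<^sup>2 \<le> \<delta>\<^sup>2"
    using norm_projector_contraction_projector_power2_le[OF E F P(2)] P(1) \<delta>(1) by simp
  then have B: "norm (E ** (mat 1 - P) ** F) \<le> \<delta>"
    by (rule power2_le_imp_le) (use \<delta>(2) in simp)
  have C: "norm (F ** (mat 1 - P) ** E) = norm (E ** (mat 1 - P) ** F)"
    by (metis norm_transpose_matrix transpose_symmetric_mat_mult3 \<open>symmetric_mat E\<close>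
        \<open>symmetric_mat F\<close> \<open>symmetric_mat (mat 1 - P)\<close>)
  have D: "norm (E ** (mat 1 - P) ** E) \<le> \<delta>\<^sup>2"
    using norm_projector_psd_projector_le_trace[OF E P(2)] \<delta>(1) by simp
  have "norm (E ** (mat 1 - P) ** F + F ** (mat 1 - P) ** E) \<le> 2 * \<delta>"
    using norm_triangle_ineq[of "E ** (mat 1 - P) ** F" "F ** (mat 1 - P) ** E"] B C by simp
  moreover have "0 \<le> c * k" "0 \<le> c * k\<^sup>2"
    using c k(1) by simp_all
  ultimately have bound: "norm (c *\<^sub>R (F ** P ** F))
      + norm ((c * k) *\<^sub>R (E ** (mat 1 - P) ** F + F ** (mat 1 - P) ** E))
      + norm ((c * k\<^sup>2) *\<^sub>R (E ** (mat 1 - P) ** E))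
    \<le> c * \<delta>\<^sup>2 + c * k * (2 * \<delta>) + c * k\<^sup>2 * \<delta>\<^sup>2"
    unfolding norm_scaleR abs_of_nonneg[OF c] abs_of_nonneg[OF \<open>0 \<le> c * k\<close>]
      abs_of_nonneg[OF \<open>0 \<le> c * k\<^sup>2\<close>]
    by (intro add_mono mult_left_mono A D \<open>norm (_ + _) \<le> 2 * \<delta>\<close> c \<open>0 \<le> c * k\<close> \<open>0 \<le> c * k\<^sup>2\<close>)
  have triangle: "norm (X - Y - Z) \<le> norm X + norm Y + norm Z" for X Y Z :: "real^'n^'n"
    using norm_triangle_ineq4[of "X - Y" Z] norm_triangle_ineq4[of X Y] by linarith
  show ?thesis
    unfolding conjugate_id_plus_scaleR_minus_id[OF E k(2)] F_def[symmetric]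
    by (rule order_trans[OF triangle bound])
qed

lemma perturbation_coefficients_le:
  fixes \<delta> \<rho> c k :: real
  assumes "0 < \<rho>" "0 \<le> \<delta>" and c: "c = 1 / \<rho>\<^sup>2" and k: "k = 1 / sqrt (1 + c)"
  shows "c * \<delta>\<^sup>2 + c * k * (2 * \<delta>) + c * k\<^sup>2 * \<delta>\<^sup>2 \<le> 2 * \<delta>\<^sup>2 / \<rho>\<^sup>2 + 2 * \<delta> / \<rho>"
proof -
  have "0 < c"
    using assms(1) by (simp add: c)
  have "1 / \<rho> = sqrt c"
    using assms(1) by (simp add: c real_sqrt_divide)
  also have "\<dots> \<le> sqrt (1 + c)"
    by simp
  finally have "c * k \<le> 1 / \<rho>"
    using assms(1) \<open>0 < c\<close> by (simp add: k c field_simps power2_eq_square)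
  then have "c * k * (2 * \<delta>) \<le> 1 / \<rho> * (2 * \<delta>)"
    using assms(2) by (intro mult_right_mono) simp_all
  moreover have "c * k\<^sup>2 \<le> c"
    using \<open>0 < c\<close> by (simp add: k power_divide pos_divide_le_eq algebra_simps)
  then have "c * k\<^sup>2 * \<delta>\<^sup>2 \<le> c * \<delta>\<^sup>2"
    by (intro mult_right_mono) simp_all
  ultimately show ?thesis
    by (simp add: c)
qed

theorem lemma4:
  fixes Pstar P :: "real^'n^'n" and m :: nat and \<delta> \<rho> :: real
  assumes "orth_projector Pstar m"
    and "\<delta> \<ge> 0" and "0 < \<rho>" and "\<rho> \<le> 1"
    and "P \<in> Pset \<delta> m Pstar"
  shows "let S = psd_sqrt (mat 1 + (1 / \<rho>\<^sup>2) *\<^sub>R P);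
             Pr = matrix_inv (psd_sqrt (mat 1 + (1 / \<rho>\<^sup>2) *\<^sub>R Pstar));
             U = Pr ** (S ** S) ** Pr;
             Ustar = mat 1
         in frob_norm (U - Ustar) \<le> 2 * \<delta>\<^sup>2 / \<rho>\<^sup>2 + 2 * \<delta> / \<rho>"
proof -
  define c k where "c = 1 / \<rho>\<^sup>2" and "k = 1 / sqrt (1 + c)"
  have Pstar: "projector Pstar" "trace Pstar = real m"
    using assms(1) trace_projector by (auto simp: orth_projector_def projector_def)
  have P: "psd P" "psd (mat 1 - P)" "trace P \<le> trace Pstar" "trace ((mat 1 - P) ** Pstar) \<le> \<delta>\<^sup>2"
    using assms(5) Pstar(2) by (auto simp: Pset_def loewner_le_def)
  have "0 < c"
    using assms(3) by (simp add: c_def)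
  then have "0 < k" "k\<^sup>2 * (1 + c) = 1"
    by (simp_all add: k_def power_divide)
  have "psd_sqrt (mat 1 + c *\<^sub>R P) ** psd_sqrt (mat 1 + c *\<^sub>R P) = mat 1 + c *\<^sub>R P"
    using \<open>0 < c\<close> by (simp add: psd_sqrt_square psd_id_plus_scaleR P(1))
  moreover have "matrix_inv (psd_sqrt (mat 1 + c *\<^sub>R Pstar)) = mat 1 + (k - 1) *\<^sub>R Pstar"
    using \<open>0 < c\<close> by (simp add: matrix_inv_psd_sqrt_id_plus_projector Pstar(1) k_def)
  ultimately show ?thesis
    using norm_conjugate_id_plus_scaleR_minus_id_le[OF Pstar(1) P assms(2), of c k]
      perturbation_coefficients_le[OF assms(3,2) c_def k_def] \<open>0 < c\<close> \<open>0 < k\<close>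
      \<open>k\<^sup>2 * (1 + c) = 1\<close>
    unfolding Let_def c_def[symmetric] frob_norm_eq_norm by simp
qed

end
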